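(* Let $q$ be a prime power, and let $g(x)\in\mathbb{F}_q[x]$ be a monic divisor of $x^{2n}-1$ with $g(x)\neq x^{2n}-1$ and $k=\deg g$. Let $\mathscr{D}=\langle g(x)\rangle$ be the $q$-ary linear cyclic code of length $2n$ generated by $g$. Let $h(x)=(x^{2n}-1)/g(x)=h_0+h_1x+\cdots+h_{2n-k}x^{2n-k}$, $h^*(x)=\frac{1}{h_{2n-k}}x^{2n-k}h(1/x)$, and let $V_{h^*(x)}\in\mathbb{F}_q^{2n}$ be the coefficient vector of $h^*(x)$ (padded with zeros). Then the $k$ vectors $\tau(V_{h^*(x)}),\tau(\sigma(V_{h^*(x)})),\ldots,\tau(\sigma^{k-1}(V_{h^*(x)}))$ are the rows of a generator matrix of the symplectic dual code $\mathscr{D}^{\perp_s}$.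
   Context: $\sigma(v_0,\ldots,v_{2n-1})=(v_{2n-1},v_0,\ldots,v_{2n-2})$ is the cyclic shift and $\tau(v_0,\ldots,v_{2n-1})=(-v_n,\ldots,-v_{2n-1},v_0,\ldots,v_{n-1})$. The symplectic inner product on $\mathbb{F}_q^{2n}$ is $\langle u,v\rangle_s=\sum_{i=0}^{n-1}(u_iv_{n+i}-u_{n+i}v_i)$ and $\mathscr{D}^{\perp_s}=\{v:\langle u,v\rangle_s=0\ \forall u\in\mathscr{D}\}$. Vectors of $\mathbb{F}_q^{2n}$ are identified with polynomials of degree $<2n$ modulo $x^{2n}-1$. *)

theory Defs
  imports "HOL-Computational_Algebra.Polynomial"
begin

text \<open>Vectors of F_q^(2n) are functions nat => 'a vanishing at indices >= 2n.\<close>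

definition vecs :: "nat \<Rightarrow> (nat \<Rightarrow> 'a::zero) set" where
  "vecs n = {v. \<forall>i. 2*n \<le> i \<longrightarrow> v i = 0}"

definition vec_of_poly :: "nat \<Rightarrow> 'a::zero poly \<Rightarrow> (nat \<Rightarrow> 'a)" where
  "vec_of_poly n p = (\<lambda>i. if i < 2*n then coeff p i else 0)"

definition sigma :: "nat \<Rightarrow> (nat \<Rightarrow> 'a::zero) \<Rightarrow> (nat \<Rightarrow> 'a)" where
  "sigma n v = (\<lambda>i. if i < 2*n then v ((i + 2*n - 1) mod (2*n)) else 0)"

definition tau :: "nat \<Rightarrow> (nat \<Rightarrow> 'a::ab_group_add) \<Rightarrow> (nat \<Rightarrow> 'a)" where
  "tau n v = (\<lambda>i. if i < n then - v (n + i) else if i < 2*n then v (i - n) else 0)"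

definition symp :: "nat \<Rightarrow> (nat \<Rightarrow> 'a::comm_ring_1) \<Rightarrow> (nat \<Rightarrow> 'a) \<Rightarrow> 'a" where
  "symp n u v = (\<Sum>i<n. u i * v (n + i) - u (n + i) * v i)"

definition symp_dual :: "nat \<Rightarrow> (nat \<Rightarrow> 'a::comm_ring_1) set \<Rightarrow> (nat \<Rightarrow> 'a) set" where
  "symp_dual n D = {v \<in> vecs n. \<forall>u\<in>D. symp n u v = 0}"

text \<open>The cyclic code of length 2n generated by g: the ideal <g> in F_q[x]/(x^(2n)-1),
  with codewords identified with their coefficient vectors.\<close>
definition cyclic_code :: "nat \<Rightarrow> 'a::field poly \<Rightarrow> (nat \<Rightarrow> 'a) set" where
  "cyclic_code n g = {vec_of_poly n ((a * g) mod (monom 1 (2*n) - 1)) | a. True}"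

definition is_generator_matrix :: "nat \<Rightarrow> (nat \<Rightarrow> nat \<Rightarrow> 'a::field) \<Rightarrow> (nat \<Rightarrow> 'a) set \<Rightarrow> bool" where
  "is_generator_matrix k r C \<longleftrightarrow>
     (\<forall>c. (\<lambda>i. \<Sum>j<k. c j * r j i) = (\<lambda>i. 0) \<longrightarrow> (\<forall>j<k. c j = 0)) \<and>
     C = {(\<lambda>i. \<Sum>j<k. c j * r j i) | c. True}"

end

theory Submission
  imports Defs
begin

text \<open>
  Since \<open>\<langle>u, \<tau> w\<rangle>\<^sub>s = u \<cdot> w\<close> and \<open>\<tau>\<close> is a bijection of \<open>\<bbbF>\<^sub>q\<^sup>2\<^sup>n\<close>, the symplectic dual is the
  image under \<open>\<tau>\<close> of the Euclidean dual. With \<open>N = 2n\<close>, the Euclidean product of the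
  coefficient vectors of \<open>U\<close> and \<open>W\<close> is the coefficient of \<open>x\<^sup>N\<^sup>-\<^sup>1\<close> in \<open>U \<cdot> rev W\<close>, where
  \<open>rev\<close> reverses the first \<open>N\<close> coefficients. As \<open>\<langle>g\<rangle>\<close> consists of the products
  \<open>g a\<close> with \<open>deg a < N - k\<close>, \<open>w\<close> is orthogonal to it iff the coefficients \<open>k, \<dots>, N - 1\<close>
  of \<open>g \<cdot> rev W\<close> vanish. Because \<open>g h = x\<^sup>N - 1\<close>, this happens iff \<open>rev W = L h\<close> with
  \<open>deg L < k\<close>, i.e. iff \<open>W = C h\<^sup>*\<close> with \<open>deg C < k\<close>. Finally \<open>deg h\<^sup>* + k \<le> N\<close>, so
  the first \<open>k\<close> cyclic shifts of \<open>h\<^sup>*\<close> are the products \<open>x\<^sup>j h\<^sup>*\<close> without wrap-around,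
  and these form a basis of \<open>{C h\<^sup>* | deg C < k}\<close>.
\<close>

lemma coeffs_vanish_from_iff: "(\<forall>i\<ge>m. coeff p i = 0) \<longleftrightarrow> p = 0 \<or> degree p < m"
proof
  assume "\<forall>i\<ge>m. coeff p i = 0"
  then show "p = 0 \<or> degree p < m"
    using leading_coeff_0_iff not_less by blast
qed (auto intro: coeff_eq_0)

lemma coeff_mult_eq_0:
  assumes "\<forall>i\<ge>a. coeff p i = 0" and "\<forall>i\<ge>b. coeff q i = 0" and "a + b \<le> m + 1"
  shows "coeff (p * q) m = 0"
  unfolding coeff_mult
proof (rule sum.neutral, rule ballI)
  fix j assume "j \<in> {..m}"
  show "coeff p j * coeff q (m - j) = 0"
  proof (cases "a \<le> j")
    case False
    then have "b \<le> m - j" using assms(3) by linarith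
    then show ?thesis using assms(2) by simp
  qed (use assms(1) in simp)
qed

definition rev_poly :: "nat \<Rightarrow> 'a::zero poly \<Rightarrow> 'a poly" where
  "rev_poly m p = Abs_poly (\<lambda>j. if j < m then coeff p (m - 1 - j) else 0)"

lemma coeff_rev_poly: "coeff (rev_poly m p) j = (if j < m then coeff p (m - 1 - j) else 0)"
  unfolding rev_poly_def by (subst coeff_Abs_poly[of m]) auto

lemma rev_poly_rev_poly:
  assumes "\<forall>i\<ge>m. coeff p i = 0"
  shows "rev_poly m (rev_poly m p) = p"
  using assms by (auto simp: poly_eq_iff coeff_rev_poly)

lemma rev_poly_0 [simp]: "rev_poly m 0 = 0"
  by (simp add: poly_eq_iff coeff_rev_poly)

lemma rev_poly_eq_monom_mult_reflect_poly:
  fixes p :: "'a::comm_semiring_1 poly"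
  assumes "degree p < m"
  shows "rev_poly m p = monom 1 (m - 1 - degree p) * reflect_poly p"
  using assms by (auto simp: poly_eq_iff coeff_rev_poly coeff_monom_mult coeff_reflect_poly
      coeff_eq_0 not_less)

lemma rev_poly_mult:
  fixes p q :: "'a::idom poly"
  assumes "\<forall>i\<ge>a. coeff p i = 0" and "\<forall>i\<ge>b. coeff q i = 0"
  shows "rev_poly (a + b - 1) (p * q) = rev_poly a p * rev_poly b q"
proof (cases "p = 0 \<or> q = 0")
  case False
  then have "degree p < a" "degree q < b"
    using assms by (auto simp: coeffs_vanish_from_iff)
  moreover have "degree (p * q) = degree p + degree q"
    using False by (simp add: degree_mult_eq)
  ultimately have deg_pq: "degree (p * q) < a + b - 1"
    and shift: "a + b - 1 - 1 - degree (p * q) = (a - 1 - degree p) + (b - 1 - degree q)"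
    by linarith+
  have "rev_poly (a + b - 1) (p * q)
      = monom 1 ((a - 1 - degree p) + (b - 1 - degree q)) * reflect_poly (p * q)"
    unfolding shift[symmetric] using deg_pq by (rule rev_poly_eq_monom_mult_reflect_poly)
  also have "\<dots> = (monom 1 (a - 1 - degree p) * reflect_poly p)
      * (monom 1 (b - 1 - degree q) * reflect_poly q)"
    by (simp add: reflect_poly_mult mult_monom ac_simps)
  also have "\<dots> = rev_poly a p * rev_poly b q"
    using \<open>degree p < a\<close> \<open>degree q < b\<close> by (simp add: rev_poly_eq_monom_mult_reflect_poly)
  finally show ?thesis .
qed auto

lemma rev_poly_reflect_poly: "rev_poly (Suc (degree p)) (reflect_poly p) = p"
  by (auto simp: poly_eq_iff coeff_rev_poly coeff_reflect_poly coeff_eq_0)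

lemma rev_poly_mult_reflect_poly:
  fixes C h :: "'a::idom poly"
  assumes "\<forall>i\<ge>k. coeff C i = 0"
  shows "rev_poly (k + degree h) (C * reflect_poly h) = rev_poly k C * h"
  using rev_poly_mult[OF assms, of "Suc (degree h)" "reflect_poly h"]
  by (simp add: coeff_reflect_poly rev_poly_reflect_poly)

lemma degree_monom_minus_1:
  assumes "N > 0"
  shows "degree (monom 1 N - 1 :: 'a::comm_ring_1 poly) = N"
  using assms by (simp add: degree_monom_eq degree_add_eq_left diff_conv_add_uminus
      del: add_uminus_conv_diff)

lemma degree_factors_monom_minus_1:
  fixes g h :: "'a::idom poly"
  assumes "g * h = monom 1 N - 1" and "N > 0"
  shows "g \<noteq> 0" "h \<noteq> 0" "degree g + degree h = N"
proof -
  have "g * h \<noteq> 0"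
    using degree_monom_minus_1[OF assms(2), where 'a='a] assms by auto
  then show "g \<noteq> 0" "h \<noteq> 0" by auto
  then show "degree g + degree h = N"
    using assms by (metis degree_mult_eq degree_monom_minus_1)
qed

lemma eq_mult_cofactor_if_coeff_gap:
  fixes g h R :: "'a::idom poly"
  assumes gh: "g * h = monom 1 N - 1" and "N > 0"
    and R: "\<forall>i\<ge>N. coeff R i = 0"
    and gap: "\<And>m. degree g \<le> m \<Longrightarrow> m < N \<Longrightarrow> coeff (g * R) m = 0"
  shows "\<exists>L. (\<forall>i\<ge>degree g. coeff L i = 0) \<and> R = L * h"
proof -
  define k where "k = degree g"
  have deg: "k + degree h = N"
    unfolding k_def using degree_factors_monom_minus_1[OF gh \<open>N > 0\<close>] by simp
  define L where "L = poly_cutoff k (g * R)"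
  define U where "U = poly_shift N (g * R)"
  have L: "\<forall>i\<ge>k. coeff L i = 0"
    by (simp add: L_def coeff_poly_cutoff)
  have split: "g * R = L + monom 1 N * U"
    using gap deg by (auto simp: poly_eq_iff L_def U_def k_def coeff_poly_cutoff coeff_poly_shift
        coeff_monom_mult)
  have "monom 1 N * R - R = (monom 1 N - 1) * R"
    by (simp add: algebra_simps)
  also have "\<dots> = h * (g * R)"
    by (simp add: gh[symmetric] ac_simps)
  also have "\<dots> = h * L + monom 1 N * (h * U)"
    unfolding split by (simp add: algebra_simps)
  finally have shifted: "R + h * L = monom 1 N * (R - h * U)"
    by (simp add: algebra_simps)
  \<comment> \<open>The left-hand side has length \<open>N\<close>, the right-hand side is divisible by \<open>x\<^sup>N\<close>.\<close>
  have "R + h * L = 0"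
  proof (rule poly_eqI)
    fix m
    show "coeff (R + h * L) m = coeff 0 m"
    proof (cases "m < N")
      case True
      then show ?thesis unfolding shifted by (simp add: coeff_monom_mult)
    next
      case False
      have "coeff (h * L) m = 0"
        by (rule coeff_mult_eq_0[of "Suc (degree h)" _ k]) (use L False deg in \<open>auto intro: coeff_eq_0\<close>)
      then show ?thesis using R False by simp
    qed
  qed
  then have "R = (- L) * h"
    by (simp add: algebra_simps eq_neg_iff_add_eq_0)
  with L show ?thesis
    unfolding k_def by (metis coeff_minus neg_equal_0_iff_equal)
qed

definition dot_prod :: "nat \<Rightarrow> (nat \<Rightarrow> 'a::comm_ring_1) \<Rightarrow> (nat \<Rightarrow> 'a) \<Rightarrow> 'a" where
  "dot_prod m u v = (\<Sum>i<m. u i * v i)"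

lemma dot_prod_vec_of_poly:
  assumes "n > 0"
  shows "dot_prod (2*n) (vec_of_poly n P) (vec_of_poly n Q) = coeff (P * rev_poly (2*n) Q) (2*n - 1)"
proof -
  have "coeff (P * rev_poly (2*n) Q) (2*n - 1) = (\<Sum>i\<le>2*n - 1. coeff P i * coeff Q i)"
    unfolding coeff_mult by (rule sum.cong) (use assms in \<open>auto simp: coeff_rev_poly\<close>)
  also have "{..2*n - 1} = {..<2*n}"
    using assms by auto
  finally show ?thesis
    by (simp add: dot_prod_def vec_of_poly_def)
qed

lemma vec_of_poly_in_vecs [simp]: "vec_of_poly n p \<in> vecs n"
  by (simp add: vecs_def vec_of_poly_def)

lemma coeff_Abs_poly_vecs:
  assumes "w \<in> vecs n"
  shows "coeff (Abs_poly w) = w"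
  using assms by (intro coeff_Abs_poly[of "2*n"]) (simp add: vecs_def)

lemma vec_of_poly_eq_0_iff:
  assumes "\<forall>i\<ge>2*n. coeff p i = 0"
  shows "vec_of_poly n p = (\<lambda>_. 0) \<longleftrightarrow> p = 0"
  using assms by (auto simp: vec_of_poly_def poly_eq_iff fun_eq_iff) (meson not_le)

lemma vec_of_poly_sum:
  "(\<lambda>i. \<Sum>j\<in>A. c j * vec_of_poly n (p j) i) = vec_of_poly n (\<Sum>j\<in>A. smult (c j) (p j))"
  by (auto simp: vec_of_poly_def fun_eq_iff coeff_sum)

lemma sigma_vec_of_poly:
  assumes "coeff p (2*n - 1) = 0"
  shows "sigma n (vec_of_poly n p) = vec_of_poly n (pCons 0 p)"
proof
  fix i
  show "sigma n (vec_of_poly n p) i = vec_of_poly n (pCons 0 p) i"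
    using assms by (cases i) (auto simp: sigma_def vec_of_poly_def)
qed

lemma sigma_pow_vec_of_poly:
  fixes p :: "'a::comm_ring_1 poly"
  assumes "degree p + j < 2*n"
  shows "(sigma n ^^ j) (vec_of_poly n p) = vec_of_poly n (monom 1 j * p)"
  using assms
proof (induction j)
  case (Suc j)
  have "coeff (monom 1 j * p) (2*n - 1) = 0"
    using Suc.prems by (auto simp: coeff_monom_mult coeff_eq_0)
  with Suc show ?case
    by (simp add: sigma_vec_of_poly monom_Suc)
qed (simp add: monom_0)

lemma tau_in_vecs [simp]: "tau n w \<in> vecs n"
  by (simp add: vecs_def tau_def)

lemma tau_tau:
  fixes v :: "nat \<Rightarrow> 'a::ab_group_add"
  assumes "v \<in> vecs n"
  shows "tau n (tau n v) = (\<lambda>i. - v i)"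
proof
  fix i
  show "tau n (tau n v) i = - v i"
    using assms by (cases "i < n"; cases "i < 2*n") (simp_all add: tau_def vecs_def)
qed

lemma tau_image_vecs: "tau n ` vecs n = (vecs n :: (nat \<Rightarrow> 'a::ab_group_add) set)"
proof
  show "vecs n \<subseteq> tau n ` (vecs n :: (nat \<Rightarrow> 'a) set)"
  proof
    fix v :: "nat \<Rightarrow> 'a" assume "v \<in> vecs n"
    then have "(\<lambda>i. - v i) \<in> vecs n"
      by (simp add: vecs_def)
    then have "v = tau n (tau n (\<lambda>i. - v i))"
      by (simp add: tau_tau)
    then show "v \<in> tau n ` vecs n"
      using tau_in_vecs by blast
  qed
qed auto

lemma tau_eq_0_iff:
  fixes v :: "nat \<Rightarrow> 'a::ab_group_add"
  assumes "v \<in> vecs n"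
  shows "tau n v = (\<lambda>_. 0) \<longleftrightarrow> v = (\<lambda>_. 0)"
proof
  assume "tau n v = (\<lambda>_. 0)"
  then have "(\<lambda>i. - v i) = tau n (\<lambda>_. 0)"
    using tau_tau[OF assms] by simp
  also have "\<dots> = (\<lambda>_. 0)"
    by (simp add: tau_def fun_eq_iff)
  finally show "v = (\<lambda>_. 0)"
    by (simp add: fun_eq_iff)
qed (simp add: tau_def fun_eq_iff)

lemma tau_sum:
  fixes r :: "nat \<Rightarrow> nat \<Rightarrow> 'a::comm_ring_1"
  shows "(\<lambda>i. \<Sum>j\<in>A. c j * tau n (r j) i) = tau n (\<lambda>i. \<Sum>j\<in>A. c j * r j i)"
  by (auto simp: tau_def sum_negf[symmetric] fun_eq_iff)

lemma sum_lessThan_add: "(\<Sum>i<m + (n::nat). f i) = (\<Sum>i<m. f i) + (\<Sum>i<n. f (m + i))"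
  by (induction n) (simp_all add: add.assoc)

lemma symp_tau: "symp n u (tau n w) = dot_prod (2*n) u w"
proof -
  have "symp n u (tau n w) = (\<Sum>i<n. u i * w i + u (n + i) * w (n + i))"
    unfolding symp_def by (rule sum.cong) (auto simp: tau_def)
  also have "\<dots> = dot_prod (n + n) u w"
    by (simp add: dot_prod_def sum_lessThan_add sum.distrib)
  finally show ?thesis
    by (simp add: mult_2)
qed

lemma symp_dual_eq_tau_image:
  "symp_dual n D = tau n ` {w \<in> vecs n. \<forall>u\<in>D. dot_prod (2*n) u w = 0}"
proof
  show "symp_dual n D \<subseteq> tau n ` {w \<in> vecs n. \<forall>u\<in>D. dot_prod (2*n) u w = 0}"
  proof
    fix v assume v: "v \<in> symp_dual n D"
    then have "v \<in> tau n ` vecs n"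
      unfolding symp_dual_def tau_image_vecs by simp
    then obtain w where "w \<in> vecs n" "v = tau n w"
      by blast
    with v show "v \<in> tau n ` {w \<in> vecs n. \<forall>u\<in>D. dot_prod (2*n) u w = 0}"
      by (auto simp: symp_dual_def symp_tau)
  qed
qed (auto simp: symp_dual_def symp_tau)

lemma cyclic_code_eq:
  fixes g h :: "'a::field poly"
  assumes "n > 0" and gh: "g * h = monom 1 (2*n) - 1"
  shows "cyclic_code n g = {vec_of_poly n (g * b) | b. \<forall>i\<ge>2*n - degree g. coeff b i = 0}"
proof -
  define f :: "'a poly" where "f = monom 1 (2*n) - 1"
  have "g \<noteq> 0" and deg_g: "degree g \<le> 2*n"
    using degree_factors_monom_minus_1[OF gh] \<open>n > 0\<close> by auto
  have deg_f: "degree f = 2*n"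
    unfolding f_def using \<open>n > 0\<close> by (simp add: degree_monom_minus_1)
  have reduced: "\<exists>b. (\<forall>i\<ge>2*n - degree g. coeff b i = 0) \<and> (a * g) mod f = g * b" for a
  proof -
    have "g dvd (a * g) mod f"
      unfolding f_def gh[symmetric] by (simp add: dvd_mod)
    then obtain b where b: "(a * g) mod f = g * b" ..
    have "g * b = 0 \<or> degree (g * b) < 2*n"
      using degree_mod_less[of f "a * g"] deg_f b \<open>n > 0\<close> by force
    then have "b = 0 \<or> degree b < 2*n - degree g"
      using \<open>g \<noteq> 0\<close> by (cases "b = 0") (auto simp: degree_mult_eq)
    with b show ?thesis
      by (auto simp: coeffs_vanish_from_iff)
  qed
  have unreduced: "(b * g) mod f = g * b" if "\<forall>i\<ge>2*n - degree g. coeff b i = 0" for b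
  proof (cases "b = 0")
    case False
    then have "degree (g * b) < degree f"
      using that deg_g deg_f \<open>g \<noteq> 0\<close> by (auto simp: coeffs_vanish_from_iff degree_mult_eq)
    then show ?thesis
      by (simp add: mod_poly_less mult.commute)
  qed simp
  show ?thesis
    unfolding cyclic_code_def f_def[symmetric]
  proof (intro set_eqI iffI)
    fix v assume "v \<in> {vec_of_poly n ((a * g) mod f) | a. True}"
    then obtain a where "v = vec_of_poly n ((a * g) mod f)" by blast
    with reduced[of a] show "v \<in> {vec_of_poly n (g * b) | b. \<forall>i\<ge>2*n - degree g. coeff b i = 0}"
      by auto
  next
    fix v assume "v \<in> {vec_of_poly n (g * b) | b. \<forall>i\<ge>2*n - degree g. coeff b i = 0}"
    then obtain b where "v = vec_of_poly n (g * b)" "\<forall>i\<ge>2*n - degree g. coeff b i = 0" by blast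
    with unreduced[of b] have "v = vec_of_poly n ((b * g) mod f)"
      by simp
    then show "v \<in> {vec_of_poly n ((a * g) mod f) | a. True}"
      by blast
  qed
qed

lemma dot_prod_cyclic_codeword_reflect_cofactor:
  fixes g h a C :: "'a::field poly"
  assumes "n > 0" and gh: "g * h = monom 1 (2*n) - 1"
    and a: "\<forall>i\<ge>2*n - degree g. coeff a i = 0" and C: "\<forall>i\<ge>degree g. coeff C i = 0"
  shows "dot_prod (2*n) (vec_of_poly n (g * a)) (vec_of_poly n (C * reflect_poly h)) = 0"
proof -
  define k where "k = degree g"
  have deg: "k + degree h = 2*n"
    unfolding k_def using degree_factors_monom_minus_1[OF gh] \<open>n > 0\<close> by simp
  define b where "b = a * rev_poly k C"
  have b: "coeff b (2*n - 1) = 0"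
    unfolding b_def
    by (rule coeff_mult_eq_0[OF a[folded k_def], of k]) (use deg \<open>n > 0\<close> in \<open>auto simp: coeff_rev_poly\<close>)
  have "dot_prod (2*n) (vec_of_poly n (g * a)) (vec_of_poly n (C * reflect_poly h))
      = coeff (g * a * rev_poly (k + degree h) (C * reflect_poly h)) (2*n - 1)"
    using dot_prod_vec_of_poly[OF \<open>n > 0\<close>] deg by simp
  also have "g * a * rev_poly (k + degree h) (C * reflect_poly h) = (g * h) * b"
    using C unfolding b_def k_def by (simp add: rev_poly_mult_reflect_poly ac_simps)
  also have "\<dots> = monom 1 (2*n) * b - b"
    by (simp add: gh algebra_simps)
  also have "coeff \<dots> (2*n - 1) = 0"
    using b \<open>n > 0\<close> by (simp add: coeff_monom_mult)
  finally show ?thesis .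
qed

lemma cyclic_code_orthogonal_coeff_gap:
  fixes g h W :: "'a::field poly"
  assumes "n > 0" and gh: "g * h = monom 1 (2*n) - 1"
    and orth: "\<forall>u\<in>cyclic_code n g. dot_prod (2*n) u (vec_of_poly n W) = 0"
    and m: "degree g \<le> m" "m < 2*n"
  shows "coeff (g * rev_poly (2*n) W) m = 0"
proof -
  define i where "i = 2*n - 1 - m"
  have "vec_of_poly n (g * monom 1 i) \<in> cyclic_code n g"
    unfolding cyclic_code_eq[OF \<open>n > 0\<close> gh] using m
    by (auto simp: i_def coeff_monom intro!: exI[of _ "monom 1 i"])
  with orth have "dot_prod (2*n) (vec_of_poly n (g * monom 1 i)) (vec_of_poly n W) = 0"
    by blast
  then have "coeff (g * monom 1 i * rev_poly (2*n) W) (2*n - 1) = 0"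
    by (simp add: dot_prod_vec_of_poly[OF \<open>n > 0\<close>])
  moreover have "g * monom 1 i * rev_poly (2*n) W = monom 1 i * (g * rev_poly (2*n) W)"
    by (simp add: ac_simps)
  moreover have "\<not> 2*n - 1 < i" and "2*n - 1 - i = m"
    using m unfolding i_def by auto
  ultimately show ?thesis
    by (simp add: coeff_monom_mult)
qed

lemma cyclic_code_orthogonal_imp_reflect_cofactor_multiple:
  fixes g h :: "'a::field poly"
  assumes "n > 0" and gh: "g * h = monom 1 (2*n) - 1"
    and w: "w \<in> vecs n" and orth: "\<forall>u\<in>cyclic_code n g. dot_prod (2*n) u w = 0"
  shows "\<exists>C. (\<forall>i\<ge>degree g. coeff C i = 0) \<and> w = vec_of_poly n (C * reflect_poly h)"
proof -
  define k where "k = degree g"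
  have deg: "k + degree h = 2*n"
    unfolding k_def using degree_factors_monom_minus_1[OF gh] \<open>n > 0\<close> by simp
  define W where "W = Abs_poly w"
  have W: "\<forall>i\<ge>2*n. coeff W i = 0" and w_eq: "w = vec_of_poly n W"
    using w coeff_Abs_poly_vecs[OF w] by (auto simp: W_def vecs_def vec_of_poly_def)
  define R where "R = rev_poly (2*n) W"
  have gap: "coeff (g * R) m = 0" if "degree g \<le> m" "m < 2*n" for m
    using cyclic_code_orthogonal_coeff_gap[OF \<open>n > 0\<close> gh _ that] orth w_eq
    unfolding R_def by simp
  obtain L where L: "\<forall>i\<ge>k. coeff L i = 0" and R_eq: "R = L * h"
    using eq_mult_cofactor_if_coeff_gap[OF gh _ _ gap] \<open>n > 0\<close>
    by (auto simp: R_def coeff_rev_poly k_def)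
  define C where "C = rev_poly k L"
  have C: "\<forall>i\<ge>k. coeff C i = 0"
    by (simp add: C_def coeff_rev_poly)
  have "rev_poly (2*n) (C * reflect_poly h) = R"
    unfolding deg[symmetric] R_eq C_def
    by (simp add: rev_poly_mult_reflect_poly[OF C[unfolded C_def]] rev_poly_rev_poly[OF L])
  then have "rev_poly (2*n) (rev_poly (2*n) (C * reflect_poly h)) = W"
    by (simp add: R_def rev_poly_rev_poly[OF W])
  moreover have "\<forall>i\<ge>2*n. coeff (C * reflect_poly h) i = 0"
    using coeff_mult_eq_0[OF C, of "Suc (degree h)" "reflect_poly h"] deg
    by (auto simp: coeff_reflect_poly)
  ultimately have "C * reflect_poly h = W"
    by (simp add: rev_poly_rev_poly)
  with C show ?thesis
    unfolding w_eq k_def by blast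
qed

lemma euclidean_dual_cyclic_code:
  fixes g h :: "'a::field poly"
  assumes "n > 0" and gh: "g * h = monom 1 (2*n) - 1"
  shows "{w \<in> vecs n. \<forall>u\<in>cyclic_code n g. dot_prod (2*n) u w = 0}
    = {vec_of_poly n (C * reflect_poly h) | C. \<forall>i\<ge>degree g. coeff C i = 0}"
  using cyclic_code_orthogonal_imp_reflect_cofactor_multiple[OF assms]
    dot_prod_cyclic_codeword_reflect_cofactor[OF assms]
  by (fastforce simp: cyclic_code_eq[OF assms])

lemma is_generator_matrix_cong:
  assumes "\<And>j. j < k \<Longrightarrow> r j = r' j"
  shows "is_generator_matrix k r C \<longleftrightarrow> is_generator_matrix k r' C"
proof -
  have "(\<lambda>i. \<Sum>j<k. c j * r j i) = (\<lambda>i. \<Sum>j<k. c j * r' j i)" for c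
    using assms by (auto intro: sum.cong)
  then show ?thesis
    unfolding is_generator_matrix_def by simp
qed

definition poly_of_coeffs :: "nat \<Rightarrow> (nat \<Rightarrow> 'a::comm_monoid_add) \<Rightarrow> 'a poly" where
  "poly_of_coeffs k c = (\<Sum>j<k. monom (c j) j)"

lemma coeff_poly_of_coeffs: "coeff (poly_of_coeffs k c) i = (if i < k then c i else 0)"
  by (simp add: poly_of_coeffs_def coeff_sum coeff_monom)

lemma range_poly_of_coeffs: "range (poly_of_coeffs k) = {C. \<forall>i\<ge>k. coeff C i = 0}"
proof (intro set_eqI iffI)
  fix C :: "'a poly" assume "C \<in> {C. \<forall>i\<ge>k. coeff C i = 0}"
  then have "C = poly_of_coeffs k (coeff C)"
    by (auto simp: poly_eq_iff coeff_poly_of_coeffs)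
  then show "C \<in> range (poly_of_coeffs k)"
    by blast
qed (auto simp: coeff_poly_of_coeffs)

lemma is_generator_matrix_tau_multiples:
  fixes p :: "'a::field poly"
  assumes "p \<noteq> 0" and deg_p: "degree p + k \<le> 2*n"
  shows "is_generator_matrix k (\<lambda>j. tau n (vec_of_poly n (monom 1 j * p)))
           (tau n ` {vec_of_poly n (C * p) | C. \<forall>i\<ge>k. coeff C i = 0})"
proof -
  have "smult a (monom 1 j * p) = monom a j * p" for a j
    by (simp add: poly_eq_iff coeff_monom_mult)
  then have combination: "(\<lambda>i. \<Sum>j<k. c j * tau n (vec_of_poly n (monom 1 j * p)) i)
      = tau n (vec_of_poly n (poly_of_coeffs k c * p))" for c
    by (simp add: tau_sum vec_of_poly_sum poly_of_coeffs_def sum_distrib_right)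
  have "\<forall>i\<ge>Suc (degree p). coeff p i = 0"
    by (simp add: coeff_eq_0)
  then have short: "\<forall>i\<ge>2*n. coeff (poly_of_coeffs k c * p) i = 0" for c
    using coeff_mult_eq_0[of k "poly_of_coeffs k c"] deg_p by (auto simp: coeff_poly_of_coeffs)
  show ?thesis
    unfolding is_generator_matrix_def combination
  proof (intro conjI allI impI)
    fix c j assume "tau n (vec_of_poly n (poly_of_coeffs k c * p)) = (\<lambda>_. 0)" and "j < k"
    then have "poly_of_coeffs k c = 0"
      using short[of c] \<open>p \<noteq> 0\<close> by (simp add: tau_eq_0_iff vec_of_poly_eq_0_iff)
    then show "c j = 0"
      using \<open>j < k\<close> coeff_poly_of_coeffs[of k c j] by simp
  next
    have "{vec_of_poly n (C * p) | C. \<forall>i\<ge>k. coeff C i = 0}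
        = (\<lambda>C. vec_of_poly n (C * p)) ` range (poly_of_coeffs k)"
      unfolding range_poly_of_coeffs by blast
    then show "tau n ` {vec_of_poly n (C * p) | C. \<forall>i\<ge>k. coeff C i = 0}
        = {tau n (vec_of_poly n (poly_of_coeffs k c * p)) | c. True}"
      by auto
  qed
qed

lemma vec_multiples_smult:
  fixes p :: "'a::field poly"
  assumes "c \<noteq> 0"
  shows "{vec_of_poly n (smult c (C * p)) | C. \<forall>i\<ge>k. coeff C i = 0}
    = {vec_of_poly n (C * p) | C. \<forall>i\<ge>k. coeff C i = 0}"
proof (intro set_eqI iffI)
  fix v assume "v \<in> {vec_of_poly n (smult c (C * p)) | C. \<forall>i\<ge>k. coeff C i = 0}"
  then obtain C where "\<forall>i\<ge>k. coeff C i = 0" "v = vec_of_poly n (smult c C * p)"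
    by auto
  moreover from this have "\<forall>i\<ge>k. coeff (smult c C) i = 0"
    by simp
  ultimately show "v \<in> {vec_of_poly n (C * p) | C. \<forall>i\<ge>k. coeff C i = 0}"
    by blast
next
  fix v assume "v \<in> {vec_of_poly n (C * p) | C. \<forall>i\<ge>k. coeff C i = 0}"
  then obtain C where "\<forall>i\<ge>k. coeff C i = 0" "v = vec_of_poly n (smult c (smult (1 / c) C * p))"
    using assms by auto
  moreover from this have "\<forall>i\<ge>k. coeff (smult (1 / c) C) i = 0"
    by simp
  ultimately show "v \<in> {vec_of_poly n (smult c (C * p)) | C. \<forall>i\<ge>k. coeff C i = 0}"
    by blast
qed

theorem lemma4p4:
  fixes g :: "'a::{finite,field} poly" and n :: nat
  assumes "n > 0"
    and "lead_coeff g = 1"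
    and "g dvd (monom 1 (2*n) - 1)"
    and "g \<noteq> monom 1 (2*n) - 1"
  defines "k \<equiv> degree g"
    and "h \<equiv> (monom 1 (2*n) - 1) div g"
  defines "hstar \<equiv> smult (1 / coeff h (2*n - k)) (reflect_poly h)"
  shows "is_generator_matrix k (\<lambda>j. tau n ((sigma n ^^ j) (vec_of_poly n hstar)))
           (symp_dual n (cyclic_code n g))"
proof -
  have gh: "g * h = monom 1 (2*n) - 1"
    unfolding h_def using assms(3) by simp
  have "h \<noteq> 0" and deg_h: "degree h = 2*n - k" and "k \<le> 2*n"
    using degree_factors_monom_minus_1[OF gh] \<open>n > 0\<close> unfolding k_def by auto
  then have c: "coeff h (2*n - k) \<noteq> 0"
    unfolding deg_h[symmetric] by simp
  then have "hstar \<noteq> 0" and deg_hstar: "degree hstar + k \<le> 2*n"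
    using \<open>h \<noteq> 0\<close> \<open>k \<le> 2*n\<close> deg_h degree_reflect_poly_le[of h] by (auto simp: hstar_def)
  have rows: "tau n ((sigma n ^^ j) (vec_of_poly n hstar)) = tau n (vec_of_poly n (monom 1 j * hstar))"
    if "j < k" for j
    using that deg_hstar by (simp add: sigma_pow_vec_of_poly)
  have "symp_dual n (cyclic_code n g) = tau n ` {vec_of_poly n (C * hstar) | C. \<forall>i\<ge>k. coeff C i = 0}"
    unfolding symp_dual_eq_tau_image euclidean_dual_cyclic_code[OF \<open>n > 0\<close> gh, folded k_def]
      hstar_def
    using c by (simp add: vec_multiples_smult)
  then show ?thesis
    using is_generator_matrix_tau_multiples[OF \<open>hstar \<noteq> 0\<close> deg_hstar]
    by (simp add: is_generator_matrix_cong[OF rows])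
qed

end
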